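(* Let $(\mu_{+},\sigma_{+})\in\mathbb{K}[[\mathtt{x}]]^{+}\times\mathfrak{M}^{+}$ and define $\phi_{(\mu_{+},\sigma_{+})}:\mathbb{K}[[\mathtt{x}]]\to\mathbb{K}[[\mathtt{x}]]\times\mathfrak{M}$ by $\phi_{(\mu_{+},\sigma_{+})}(f):=\sum_{n\ge0}f_n(\mu_{+},\sigma_{+})^{\rtimes n}$ for $f=\sum_{n\ge0}f_n\mathtt{x}^n$ (the series converges). Then $\phi_{(\mu_{+},\sigma_{+})}$ is $\mathbb{K}$-linear and maps $\mathtt{x}$ to $(\mu_{+},\sigma_{+})$. Moreover, if $f\in\mathfrak{M}$ then $\phi_{(\mu_{+},\sigma_{+})}(f)\in\mathbb{K}[[\mathtt{x}]]^{+}\times\mathfrak{M}^{+}$, and if $\langle f,1\rangle=1$ then $\phi_{(\mu_{+},\sigma_{+})}(f)\in\mathsf{UM}\rtimes\mathsf{US}$.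
   Context: $\mathbb{K}$ is a field of characteristic zero (discrete topology); $\mathbb{K}[[\mathtt{x}]]$ has the $(\mathtt{x})$-adic topology given by the order valuation $\nu$ ($\nu(0)=+\infty$); $\langle f,1\rangle$ is the constant term of $f$. $\mathfrak{M}:=\mathtt{x}\mathbb{K}[[\mathtt{x}]]$; $\mathbb{K}[[\mathtt{x}]]\times\mathfrak{M}$ has the product topology and componentwise vector space structure. $\mathbb{K}[[\mathtt{x}]]^{+}:=\mathfrak{M}$, $\mathfrak{M}^{+}:=\{\sigma\in\mathfrak{M}:\nu(\sigma)>1\}$. For $g=\sum g_n\mathtt{x}^n$ and $\sigma\in\mathfrak{M}$, $g\circ\sigma:=\sum g_n\sigma^n$. Product: $(\mu_1,\sigma_1)\rtimes(\mu_2,\sigma_2):=((\mu_1\circ\sigma_2)\mu_2,\sigma_1\circ\sigma_2)$; $(\mu,\sigma)^{\rtimes0}:=(1,\mathtt{x})$, $(\mu,\sigma)^{\rtimes n}$ the $n$-fold product. $\mathsf{UM}:=\{1+\mu_{+}:\mu_{+}\in\mathbb{K}[[\mathtt{x}]]^{+}\}$, $\mathsf{US}:=\{\mathtt{x}+\sigma_{+}:\sigma_{+}\in\mathfrak{M}^{+}\}$, and $\mathsf{UM}\rtimes\mathsf{US}$ (the Riordan group) is the set of pairs $(\mu,\sigma)$ with $\mu\in\mathsf{UM}$, $\sigma\in\mathsf{US}$. *)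

theory Defs
  imports "HOL-Computational_Algebra.Formal_Power_Series" "HOL-Library.Product_Plus"
begin

(* K[[x]] is 'a fps with 'a :: field_char_0; its topology is the library's
   (x)-adic metric (dist_fps_def); pairs carry the product topology. *)

definition fpsM :: "'a::field_char_0 fps set" where
  "fpsM = {\<sigma>. \<sigma> = 0 \<or> subdegree \<sigma> \<ge> 1}"

definition fpsMplus :: "'a::field_char_0 fps set" where
  "fpsMplus = {\<sigma>. \<sigma> = 0 \<or> subdegree \<sigma> > 1}"

definition fpsPlus :: "'a::field_char_0 fps set" where
  "fpsPlus = fpsM"

definition UM :: "'a::field_char_0 fps set" where
  "UM = {1 + \<mu>p | \<mu>p. \<mu>p \<in> fpsPlus}"

definition US :: "'a::field_char_0 fps set" where
  "US = {fps_X + \<sigma>p | \<sigma>p. \<sigma>p \<in> fpsMplus}"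

definition rtimes :: "'a::field_char_0 fps \<times> 'a fps \<Rightarrow> 'a fps \<times> 'a fps \<Rightarrow> 'a fps \<times> 'a fps"
  (infixl \<open>\<rtimes>\<close> 70) where
  "rtimes p q = (((fst p) oo (snd q)) * fst q, (snd p) oo (snd q))"

primrec rt_pow :: "'a::field_char_0 fps \<times> 'a fps \<Rightarrow> nat \<Rightarrow> 'a fps \<times> 'a fps" where
  "rt_pow p 0 = (1, fps_X)"
| "rt_pow p (Suc n) = rt_pow p n \<rtimes> p"

definition pscale :: "'a::field_char_0 \<Rightarrow> 'a fps \<times> 'a fps \<Rightarrow> 'a fps \<times> 'a fps" where
  "pscale c p = (fps_const c * fst p, fps_const c * snd p)"

definition phi :: "'a::field_char_0 fps \<times> 'a fps \<Rightarrow> 'a fps \<Rightarrow> 'a fps \<times> 'a fps" where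
  "phi p f = (\<Sum>n. pscale (fps_nth f n) (rt_pow p n))"

end

theory Submission
  imports Defs
begin

text \<open>Since \<open>\<nu>(\<sigma>\<^sub>+) \<ge> 2\<close>, composition with \<open>\<sigma>\<^sub>+\<close> at least doubles the order, so by
  induction the \<open>n\<close>-th power \<open>(\<mu>\<^sub>+, \<sigma>\<^sub>+)\<^sup>\<rtimes>\<^sup>n\<close> has components of order \<open>\<ge> n\<close> and \<open>\<ge> n + 1\<close>.
  Hence every coefficient of the partial sums of \<open>\<phi>(f)\<close> is eventually constant, the
  series converges in the \<open>(x)\<close>-adic topology, and its coefficients are finite sums that
  are visibly linear in \<open>f\<close>. The memberships follow by reading off the coefficients of
  degree \<open>0\<close> and \<open>1\<close>, which only involve \<open>(1, x)\<close> and \<open>(\<mu>\<^sub>+, \<sigma>\<^sub>+)\<close>.\<close>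

unbundle fps_syntax

lemma sums_Pair:
  assumes "a sums A" and "b sums B"
  shows "(\<lambda>n. (a n, b n)) sums (A, B)"
proof -
  have "\<And>N. (\<Sum>n<N. (a n, b n)) = (\<Sum>n<N. a n, \<Sum>n<N. b n)"
    by (simp add: prod_eq_iff fst_sum snd_sum)
  then show ?thesis
    using tendsto_Pair[OF assms[unfolded sums_def]] by (simp add: sums_def)
qed

lemma sums_fps_if_nth_below_zero:
  fixes g :: "nat \<Rightarrow> 'a::comm_ring_1 fps"
  assumes "\<And>n k. k < n \<Longrightarrow> g n $ k = 0"
  shows "(\<lambda>n. fps_const (c n) * g n) sums Abs_fps (\<lambda>k. \<Sum>n\<le>k. c n * g n $ k)"
  unfolding sums_def
proof (rule tendsto_fpsI)
  fix k
  have "(\<Sum>n<N. fps_const (c n) * g n) $ k = (\<Sum>n\<le>k. c n * g n $ k)" if "Suc k \<le> N" for N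
    unfolding fps_sum_nth fps_mult_left_const_nth
    using that assms by (intro sum.mono_neutral_right) auto
  then show "eventually (\<lambda>N. (\<Sum>n<N. fps_const (c n) * g n) $ k =
      Abs_fps (\<lambda>k. \<Sum>n\<le>k. c n * g n $ k) $ k) sequentially"
    unfolding eventually_sequentially by auto
qed

lemma fpsM_iff: "\<sigma> \<in> fpsM \<longleftrightarrow> \<sigma> $ 0 = 0"
  unfolding fpsM_def by (cases "\<sigma> = 0") (auto intro: subdegree_geI nth_less_subdegree_zero)

lemma fpsMplus_iff: "\<sigma> \<in> fpsMplus \<longleftrightarrow> \<sigma> $ 0 = 0 \<and> \<sigma> $ 1 = 0"
proof (cases "\<sigma> = 0")
  case False
  then show ?thesis
    unfolding fpsMplus_def Suc_le_eq[symmetric] numeral_2_eq_2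
    by (auto intro: subdegree_geI nth_less_subdegree_zero simp: less_Suc_eq)
qed (simp add: fpsMplus_def)

lemma UM_iff: "f \<in> UM \<longleftrightarrow> f $ 0 = 1"
  unfolding UM_def fpsPlus_def fpsM_iff by (auto intro!: exI[of _ "f - 1"])

lemma US_iff: "f \<in> US \<longleftrightarrow> f $ 0 = 0 \<and> f $ 1 = 1"
  unfolding US_def fpsMplus_iff by (auto intro!: exI[of _ "f - fps_X"])

lemma fps_mult_nth_below_zero:
  fixes f g :: "'a::{comm_monoid_add,mult_zero} fps"
  assumes "\<And>i. i < m \<Longrightarrow> f $ i = 0" and "\<And>j. j < n \<Longrightarrow> g $ j = 0" and "k < m + n"
  shows "(f * g) $ k = 0"
  unfolding fps_mult_nth
proof (intro sum.neutral ballI)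
  fix i assume "i \<in> {0..k}"
  then have "i < m \<or> k - i < n"
    using assms(3) by auto
  then show "f $ i * g $ (k - i) = 0"
    using assms(1,2) by auto
qed

lemma fps_power_Mplus_nth_below:
  assumes "\<sigma> \<in> fpsMplus" and "k < 2 * n"
  shows "(\<sigma> ^ n) $ k = 0"
proof (cases "\<sigma> = 0")
  case False
  then have "2 \<le> subdegree \<sigma>"
    using assms(1) by (simp add: fpsMplus_def)
  then have "2 * n \<le> n * subdegree \<sigma>"
    by (simp add: mult.commute)
  with assms(2) have "k < n * subdegree \<sigma>"
    by linarith
  then show ?thesis
    by (rule fps_pow_nth_below_subdegree)
qed (use assms(2) in \<open>simp add: power_0_left\<close>)

lemma fps_compose_Mplus_nth_below:
  assumes "\<sigma> \<in> fpsMplus" and "\<And>i. i < n \<Longrightarrow> a $ i = 0" and "k < 2 * n"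
  shows "(a oo \<sigma>) $ k = 0"
  unfolding fps_compose_nth
proof (intro sum.neutral ballI)
  fix i assume "i \<in> {0..k}"
  show "a $ i * (\<sigma> ^ i) $ k = 0"
  proof (cases "i < n")
    case False
    with \<open>i \<in> {0..k}\<close> assms(3) have "k < 2 * i" by simp
    then show ?thesis using fps_power_Mplus_nth_below[OF assms(1)] by simp
  qed (simp add: assms(2))
qed

lemma rt_pow_Suc_components:
  "rt_pow p (Suc n) = ((fst (rt_pow p n) oo snd p) * fst p, snd (rt_pow p n) oo snd p)"
  by (simp add: rtimes_def)

context
  fixes \<mu> \<sigma> :: "'a::field_char_0 fps"
  assumes \<mu>: "\<mu> \<in> fpsPlus" and \<sigma>: "\<sigma> \<in> fpsMplus"
begin

lemma rt_pow_fst_nth_below: "k < n \<Longrightarrow> fst (rt_pow (\<mu>, \<sigma>) n) $ k = 0"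
proof (induction n arbitrary: k)
  case (Suc n k)
  have "(fst (rt_pow (\<mu>, \<sigma>) n) oo \<sigma>) $ i = 0" if "i < n" for i
    using Suc.IH that by (simp add: fps_compose_Mplus_nth_below[OF \<sigma>, of n])
  moreover have "\<mu> $ j = 0" if "j < 1" for j
    using \<mu> that by (simp add: fpsPlus_def fpsM_iff)
  moreover have "k < n + 1"
    using Suc.prems by simp
  ultimately show ?case
    unfolding rt_pow_Suc_components fst_conv snd_conv by (rule fps_mult_nth_below_zero)
qed simp

lemma rt_pow_snd_nth_below: "k \<le> n \<Longrightarrow> snd (rt_pow (\<mu>, \<sigma>) n) $ k = 0"
proof (induction n arbitrary: k)
  case 0
  then show ?case by simp
next
  case (Suc n k)
  then show ?case
    unfolding rt_pow_Suc_components snd_conv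
    by (simp add: fps_compose_Mplus_nth_below[OF \<sigma>, of "Suc n"])
qed

lemma phi_series_sums:
  "(\<lambda>n. pscale (f $ n) (rt_pow (\<mu>, \<sigma>) n)) sums
     (Abs_fps (\<lambda>k. \<Sum>n\<le>k. f $ n * fst (rt_pow (\<mu>, \<sigma>) n) $ k),
      Abs_fps (\<lambda>k. \<Sum>n\<le>k. f $ n * snd (rt_pow (\<mu>, \<sigma>) n) $ k))"
  unfolding pscale_def
  by (intro sums_Pair sums_fps_if_nth_below_zero) (simp_all add: rt_pow_fst_nth_below rt_pow_snd_nth_below)

lemma summable_phi_series: "summable (\<lambda>n. pscale (f $ n) (rt_pow (\<mu>, \<sigma>) n))"
  using phi_series_sums by (rule sums_summable)

lemma phi_nth:
  "fst (phi (\<mu>, \<sigma>) f) $ k = (\<Sum>n\<le>k. f $ n * fst (rt_pow (\<mu>, \<sigma>) n) $ k)"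
  "snd (phi (\<mu>, \<sigma>) f) $ k = (\<Sum>n\<le>k. f $ n * snd (rt_pow (\<mu>, \<sigma>) n) $ k)"
  by (simp_all add: phi_def sums_unique[OF phi_series_sums, symmetric])

lemma phi_add: "phi (\<mu>, \<sigma>) (f + g) = phi (\<mu>, \<sigma>) f + phi (\<mu>, \<sigma>) g"
  by (simp add: prod_eq_iff fps_eq_iff phi_nth distrib_right sum.distrib)

lemma phi_const_mult: "phi (\<mu>, \<sigma>) (fps_const c * f) = pscale c (phi (\<mu>, \<sigma>) f)"
  by (simp add: prod_eq_iff fps_eq_iff pscale_def phi_nth sum_distrib_left mult.assoc)

lemma phi_X: "phi (\<mu>, \<sigma>) fps_X = (\<mu>, \<sigma>)"
proof -
  have X_sum: "(\<Sum>n\<le>k. fps_X $ n * h n $ k) = (if k = 0 then 0 else h 1 $ k)"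
    for h :: "nat \<Rightarrow> 'a fps" and k
  proof -
    have "(\<Sum>n\<le>k. fps_X $ n * h n $ k) = (\<Sum>n\<le>k. if n = 1 then h n $ k else 0)"
      by (intro sum.cong) simp_all
    then show ?thesis
      by (simp add: sum.delta)
  qed
  have "\<mu> $ 0 = 0" and "\<sigma> $ 0 = 0"
    using \<mu> \<sigma> by (simp_all add: fpsPlus_def fpsM_iff fpsMplus_iff)
  then show ?thesis
    unfolding prod_eq_iff fps_eq_iff phi_nth X_sum by (simp add: rtimes_def)
qed

lemma phi_low_coeffs:
  "fst (phi (\<mu>, \<sigma>) f) $ 0 = f $ 0"
  "snd (phi (\<mu>, \<sigma>) f) $ 0 = 0"
  "snd (phi (\<mu>, \<sigma>) f) $ 1 = f $ 0"
  using \<sigma> by (simp_all add: phi_nth fpsMplus_iff rtimes_def)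

lemma phi_in_fpsPlus_fpsMplus: "f \<in> fpsM \<Longrightarrow> phi (\<mu>, \<sigma>) f \<in> fpsPlus \<times> fpsMplus"
  using phi_low_coeffs[of f] by (simp add: mem_Times_iff fpsPlus_def fpsM_iff fpsMplus_iff)

lemma phi_in_UM_US: "f $ 0 = 1 \<Longrightarrow> phi (\<mu>, \<sigma>) f \<in> UM \<times> US"
  using phi_low_coeffs[of f] by (simp add: mem_Times_iff UM_iff US_iff)

end

theorem mainTheorem10:
  fixes \<mu> \<sigma> :: "'a::field_char_0 fps"
  assumes "\<mu> \<in> fpsPlus" and "\<sigma> \<in> fpsMplus"
  shows "(\<forall>f. summable (\<lambda>n. pscale (fps_nth f n) (rt_pow (\<mu>, \<sigma>) n)))
    \<and> (\<forall>f g. phi (\<mu>, \<sigma>) (f + g) = phi (\<mu>, \<sigma>) f + phi (\<mu>, \<sigma>) g)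
    \<and> (\<forall>c f. phi (\<mu>, \<sigma>) (fps_const c * f) = pscale c (phi (\<mu>, \<sigma>) f))
    \<and> phi (\<mu>, \<sigma>) fps_X = (\<mu>, \<sigma>)
    \<and> (\<forall>f. f \<in> fpsM \<longrightarrow> phi (\<mu>, \<sigma>) f \<in> fpsPlus \<times> fpsMplus)
    \<and> (\<forall>f. fps_nth f 0 = 1 \<longrightarrow> phi (\<mu>, \<sigma>) f \<in> UM \<times> US)"
  using summable_phi_series[OF assms] phi_add[OF assms] phi_const_mult[OF assms] phi_X[OF assms]
    phi_in_fpsPlus_fpsMplus[OF assms] phi_in_UM_US[OF assms]
  by blast

end
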